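(* Let $s \ge 4$ and let $X$ be an antipodal $s$-distance set in the unit sphere $S^{d-1}\subset\mathbb{R}^d$ with $|X| \ge 4\binom{d+s-3}{s-2} + 2$. Then every $\beta \in B(X)$ is a rational number.
   Context: A finite set $X \subset \mathbb{R}^d$ is an $s$-distance set if the set of Euclidean distances between distinct points of $X$ has exactly $s$ elements. $X$ is antipodal if $-x \in X$ for every $x \in X$. For $X \subset S^{d-1}$, $B(X) = \{(x,y) : x, y \in X, x \neq y\}$, where $(\cdot,\cdot)$ is the standard inner product. *)

theory Defs
  imports "HOL-Analysis.Analysis"
begin

definition distances :: "'a::metric_space set \<Rightarrow> real set" where
  "distances X = {dist x y | x y. x \<in> X \<and> y \<in> X \<and> x \<noteq> y}"

definition s_distance_set :: "nat \<Rightarrow> 'a::metric_space set \<Rightarrow> bool" where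
  "s_distance_set s X \<longleftrightarrow> finite X \<and> card (distances X) = s"

definition antipodal :: "'a::real_vector set \<Rightarrow> bool" where
  "antipodal X \<longleftrightarrow> (\<forall>x\<in>X. - x \<in> X)"

definition B :: "'a::real_inner set \<Rightarrow> real set" where
  "B X = {x \<bullet> y | x y. x \<in> X \<and> y \<in> X \<and> x \<noteq> y}"

end

theory Submission
  imports Defs Jordan_Normal_Form.Jordan_Normal_Form_Uniqueness Jordan_Normal_Form.Jordan_Normal_Form_Existence
begin

text \<open>Pick one point of every antipodal pair of \<open>X\<close>, giving \<open>Y\<close> with \<open>|Y| = |X|/2\<close>. The inner
  products of distinct points of \<open>Y\<close> lie in a set \<open>A\<close> of at most \<open>s - 1\<close> values, symmetric about 0.
  For \<open>\<beta> \<in> A\<close>, \<open>\<beta> \<noteq> 0\<close>, a polynomial \<open>h\<close> of degree \<open>k \<le> s - 3\<close> and parity \<open>k\<close> vanishing on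
  \<open>A - {\<beta>, -\<beta>}\<close> makes the matrix \<open>(h (x \<bullet> y))\<^sub>x\<^sub>,\<^sub>y\<^sub>\<in>\<^sub>Y\<close> equal to \<open>h(1) I + h(\<beta>) R\<close> with \<open>R\<close> rational.
  Homogenised on the sphere, it factors through the degree-\<open>k\<close> forms in \<open>d\<close> variables, so its rank is
  below \<open>|Y|/2\<close>. Then \<open>-h(1)/h(\<beta>)\<close> is an eigenvalue of \<open>R\<close> of multiplicity above half the size of \<open>R\<close>,
  hence rational. Doing the same for \<open>t h(t)\<close> shows that \<open>h(1)/(\<beta> h(\<beta>))\<close> is rational, and so is \<open>\<beta>\<close>.\<close>

section \<open>Rational roots and eigenvalues of high multiplicity\<close>

interpretation of_rat_poly: map_poly_idom_hom "of_rat :: rat \<Rightarrow> complex" by unfold_locales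

definition rat_min_poly :: "complex \<Rightarrow> rat poly \<Rightarrow> bool" where
  "rat_min_poly c f \<longleftrightarrow> f \<noteq> 0 \<and> poly (map_poly of_rat f) c = 0 \<and>
     (\<forall>g. g \<noteq> 0 \<and> poly (map_poly of_rat g) c = 0 \<longrightarrow> degree f \<le> degree g)"

lemma rat_min_poly_exists:
  assumes "p \<noteq> 0" and "poly (map_poly of_rat p) c = 0"
  obtains f where "rat_min_poly c f"
  using ex_has_least_nat[of "\<lambda>g. g \<noteq> 0 \<and> poly (map_poly of_rat g) c = 0" p degree] assms
  unfolding rat_min_poly_def by blast

lemma rat_min_poly_dvd:
  assumes f: "rat_min_poly c f" and g: "poly (map_poly of_rat g) c = 0"
  shows "f dvd g"
proof -
  have "g = f * (g div f) + g mod f" by simp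
  then have "map_poly (of_rat :: rat \<Rightarrow> complex) g
      = map_poly of_rat f * map_poly of_rat (g div f) + map_poly of_rat (g mod f)"
    by (metis of_rat_poly.hom_add of_rat_poly.hom_mult)
  then have "poly (map_poly of_rat (g mod f)) c = 0"
    using f g by (simp add: rat_min_poly_def)
  moreover have "g mod f = 0 \<or> degree (g mod f) < degree f"
    using degree_mod_less' f by (auto simp: rat_min_poly_def)
  ultimately have "g mod f = 0"
    using f unfolding rat_min_poly_def by force
  then show ?thesis by (simp add: mod_eq_0_iff_dvd)
qed

lemma rat_min_poly_degree_pos:
  assumes "rat_min_poly c f"
  shows "0 < degree f"
proof (rule ccontr)
  assume "\<not> 0 < degree f"
  then obtain a where "f = [:a:]" by (metis degree_eq_zeroE gr0I)
  with assms show False by (auto simp: rat_min_poly_def)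
qed

lemma rat_min_poly_order:
  assumes f: "rat_min_poly c f"
  shows "Polynomial.order c (map_poly of_rat f) = 1"
proof -
  have "0 < degree f" by (rule rat_min_poly_degree_pos[OF f])
  then have "pderiv f \<noteq> 0" and "degree (pderiv f) < degree f"
    using pderiv_eq_0_iff[of f] degree_pderiv[of f] by auto
  then have "poly (map_poly of_rat (pderiv f)) c \<noteq> 0"
    using f unfolding rat_min_poly_def by auto
  then have "poly (pderiv (map_poly of_rat f)) c \<noteq> 0"
    by (simp add: of_rat_hom.map_poly_pderiv)
  then have "Polynomial.order c (pderiv (map_poly of_rat f)) = 0"
    by (simp add: order_0I)
  moreover have "map_poly of_rat f \<noteq> 0" and "poly (map_poly of_rat f) c = 0"
    using f unfolding rat_min_poly_def by auto
  ultimately show ?thesis using order_pderiv[of "map_poly of_rat f" c] by simp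
qed

lemma rat_min_poly_degree_mult_order_le:
  assumes f: "rat_min_poly c f"
  shows "g \<noteq> 0 \<Longrightarrow> degree f * Polynomial.order c (map_poly of_rat g) \<le> degree g"
proof (induction "degree g" arbitrary: g rule: less_induct)
  case less
  show ?case
  proof (cases "poly (map_poly of_rat g) c = 0")
    case False
    then show ?thesis by (simp add: order_0I)
  next
    case True
    from rat_min_poly_dvd[OF f True] obtain q where gq: "g = f * q" by (auto elim: dvdE)
    have f0: "f \<noteq> 0" using f by (simp add: rat_min_poly_def)
    have q0: "q \<noteq> 0" using less.prems gq by auto
    have deg: "degree g = degree f + degree q"
      using gq f0 q0 by (simp add: degree_mult_eq)
    then have "degree q < degree g"
      using rat_min_poly_degree_pos[OF f] by simp
    from less.hyps[OF this q0] have IH: "degree f * Polynomial.order c (map_poly of_rat q) \<le> degree q" .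
    have "Polynomial.order c (map_poly of_rat g) = Polynomial.order c (map_poly of_rat f) + Polynomial.order c (map_poly of_rat q)"
      using gq f0 q0 by (simp add: of_rat_poly.hom_mult order_mult)
    then show ?thesis
      using IH deg rat_min_poly_order[OF f] by (simp add: algebra_simps)
  qed
qed

text \<open>The minimal polynomial \<open>f\<close> of \<open>c\<close> is separable, so \<open>f ^ m\<close> divides \<open>p\<close> where \<open>m\<close> is the
  multiplicity of \<open>c\<close>; \<open>m > deg p / 2\<close> then forces \<open>deg f = 1\<close>.\<close>

lemma rational_if_order_gt_half_degree:
  fixes p :: "rat poly" and c :: complex
  assumes p: "p \<noteq> 0" and order: "degree p < 2 * Polynomial.order c (map_poly of_rat p)"
  shows "c \<in> \<rat>"
proof -
  have "Polynomial.order c (map_poly of_rat p) \<noteq> 0" using order by auto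
  then have "poly (map_poly of_rat p) c = 0"
    using p order_root[of "map_poly of_rat p" c] by auto
  then obtain f where f: "rat_min_poly c f" using rat_min_poly_exists p by blast
  have "degree f * Polynomial.order c (map_poly of_rat p) < 2 * Polynomial.order c (map_poly of_rat p)"
    using rat_min_poly_degree_mult_order_le[OF f p] order by linarith
  then have "degree f < 2" by (metis mult_less_cancel2)
  then have deg: "degree f = 1" using rat_min_poly_degree_pos[OF f] by simp
  have f_eq: "f = [:coeff f 0, coeff f 1:]"
  proof (rule poly_eqI)
    fix n show "coeff f n = coeff [:coeff f 0, coeff f 1:] n"
      using coeff_eq_0[of f n] deg by (cases n; cases "n - 1") auto
  qed
  have lead: "coeff f 1 \<noteq> 0"
    using deg f by (metis leading_coeff_neq_0 rat_min_poly_def)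
  have "of_rat (coeff f 0) + c * of_rat (coeff f 1) = 0"
    using f lead by (subst (asm) f_eq)
      (auto simp: rat_min_poly_def map_poly_pCons algebra_simps split: if_splits)
  then have "c = of_rat (- coeff f 0 / coeff f 1)"
    using lead by (simp add: of_rat_divide of_rat_minus field_simps add_eq_0_iff)
  then show ?thesis by simp
qed

lemma kernel_dim_ge_cols_minus_rows:
  fixes V :: "'a :: field mat"
  assumes V: "V \<in> carrier_mat N n"
  shows "n - N \<le> kernel_dim V"
proof -
  obtain B where gj: "gauss_jordan_single V = B" by auto
  from gauss_jordan_single[OF V gj] have B: "B \<in> carrier_mat N n" and row: "row_echelon_form B"
    by auto
  from find_base_vectors(5)[OF row B]
  have "length (pivot_positions B) = card {i. i < N \<and> row B i \<noteq> 0\<^sub>v n}" .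
  also have "\<dots> \<le> card {..<N}" by (rule card_mono) auto
  finally have "length (pivot_positions B) \<le> N" by simp
  then show ?thesis unfolding kernel_dim_code gj using V by auto
qed

lemma kernel_dim_le_kernel_dim_mult:
  fixes V :: "'a :: field mat"
  assumes V: "V \<in> carrier_mat N n" and U: "U \<in> carrier_mat m N"
  shows "kernel_dim V \<le> kernel_dim (U * V)"
proof -
  have UV: "U * V \<in> carrier_mat m n" using U V by auto
  interpret KV: kernel N n V by (unfold_locales, rule V)
  interpret KP: kernel m n "U * V" by (unfold_locales, rule UV)
  obtain bas where fb: "finite bas" and bas: "KV.basis bas" using kernel_basis_exists[OF V] by auto
  obtain bas2 where fb2: "finite bas2" and bas2: "KP.basis bas2" using kernel_basis_exists[OF UV] by auto
  have dimV: "KV.dim = card bas" by (rule KV.Ker.dim_basis[OF fb bas])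
  have sub1: "bas \<subseteq> mat_kernel V" using bas unfolding KV.Ker.basis_def by auto
  have sub2: "mat_kernel V \<subseteq> mat_kernel (U * V)" by (rule mat_kernel_mult_subset[OF V U])
  have "KV.lin_indpt bas" using bas unfolding KV.Ker.basis_def by auto
  then have "\<not> KV.NC.lin_dep bas" using KV.lindep_same[OF sub1] by simp
  then have li: "KP.lin_indpt bas" using KP.lindep_same sub1 sub2 by auto
  have fd: "KP.Ker.fin_dim"
    unfolding KP.Ker.fin_dim_def using fb2 bas2 unfolding KP.Ker.basis_def by auto
  have "card bas \<le> KP.dim" using KP.Ker.li_le_dim(2)[OF fd _ li] sub1 sub2 by auto
  then show ?thesis using dimV V UV by simp
qed

lemma kernel_dim_char_matrix_le_order:
  fixes M :: "complex mat"
  assumes M: "M \<in> carrier_mat n n"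
  shows "kernel_dim (char_matrix M c) \<le> Polynomial.order c (char_poly M)"
proof -
  from char_poly_factorized[OF M] obtain as where "char_poly M = (\<Prod>a\<leftarrow>as. [:- a, 1:])" by auto
  from jordan_nf_exists[OF M this] obtain n_as where jnf: "jordan_nf M n_as" by auto
  have "kernel_dim (char_matrix M c) = dim_gen_eigenspace M c 1"
    unfolding dim_gen_eigenspace_def using M by simp
  also have "\<dots> \<le> Polynomial.order c (char_poly M)"
    unfolding dim_gen_eigenspace[OF jnf] jordan_nf_order[OF jnf] by (induct n_as) auto
  finally show ?thesis .
qed

lemma rational_if_large_eigenspace:
  fixes Mq :: "rat mat" and c :: complex
  assumes Mq: "Mq \<in> carrier_mat n n"
    and large: "n < 2 * kernel_dim (char_matrix (of_rat_hom.mat_hom Mq) c)"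
  shows "c \<in> \<rat>"
proof (rule rational_if_order_gt_half_degree)
  have deg: "degree (char_poly Mq) = n" using degree_monic_char_poly[OF Mq] by auto
  show "char_poly Mq \<noteq> 0" using degree_monic_char_poly[OF Mq] by auto
  have "n < 2 * kernel_dim (char_matrix (of_rat_hom.mat_hom Mq) c)" by (rule large)
  also have "\<dots> \<le> 2 * Polynomial.order c (char_poly (of_rat_hom.mat_hom Mq))"
    using kernel_dim_char_matrix_le_order[of "of_rat_hom.mat_hom Mq" n c] Mq by simp
  also have "char_poly (of_rat_hom.mat_hom Mq) = map_poly of_rat (char_poly Mq)"
    by (rule of_rat_hom.char_poly_hom[OF Mq])
  finally show "degree (char_poly Mq) < 2 * Polynomial.order c (map_poly of_rat (char_poly Mq))"
    using deg by simp
qed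

text \<open>The matrix \<open>F\<close> on \<open>Y \<times> Y\<close> has rank at most \<open>card J\<close>, so \<open>-a/b\<close> is an eigenvalue
  of the rational matrix \<open>R\<close> (with zero diagonal) of geometric multiplicity above \<open>card Y / 2\<close>.\<close>

lemma diag_ratio_rational_if_low_rank:
  fixes Y :: "'a set" and J :: "'b set" and F :: "'a \<Rightarrow> 'a \<Rightarrow> real"
    and R :: "'a \<Rightarrow> 'a \<Rightarrow> rat" and a b :: real
    and u :: "'a \<Rightarrow> 'b \<Rightarrow> real" and v :: "'b \<Rightarrow> 'a \<Rightarrow> real"
  assumes fY: "finite Y" and fJ: "finite J" and b0: "b \<noteq> 0"
    and low_rank: "2 * card J < card Y"
    and FR: "\<And>x y. x \<in> Y \<Longrightarrow> y \<in> Y \<Longrightarrow> F x y = (if x = y then a else b * of_rat (R x y))"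
    and Fuv: "\<And>x y. x \<in> Y \<Longrightarrow> y \<in> Y \<Longrightarrow> F x y = (\<Sum>j\<in>J. u x j * v j y)"
  shows "a / b \<in> \<rat>"
proof -
  obtain xs where xs: "set xs = Y" "distinct xs" using finite_distinct_list[OF fY] by auto
  obtain js where js: "set js = J" "distinct js" using finite_distinct_list[OF fJ] by auto
  define n where "n = length xs"
  define N where "N = length js"
  have nY: "n = card Y" unfolding n_def using xs distinct_card by metis
  have NJ: "N = card J" unfolding N_def using js distinct_card by metis
  have xsY: "\<And>i. i < n \<Longrightarrow> xs ! i \<in> Y" unfolding n_def using xs by auto
  have xs_inj: "\<And>i k. i < n \<Longrightarrow> k < n \<Longrightarrow> xs ! i = xs ! k \<longleftrightarrow> i = k"
    unfolding n_def using xs nth_eq_iff_index_eq by blast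
  have bij: "bij_betw (nth js) {..<N} J"
    unfolding N_def using js by (metis bij_betw_nth lessThan_atLeast0)
  define Mq where "Mq = Matrix.mat n n (\<lambda>(i,k). if i = k then 0 else R (xs!i) (xs!k))"
  define U where "U = Matrix.mat n N (\<lambda>(i,j). complex_of_real (u (xs!i) (js!j)))"
  define V where "V = Matrix.mat N n (\<lambda>(j,k). complex_of_real (v (js!j) (xs!k) / b))"
  define c where "c = complex_of_real (- a / b)"
  have Mq: "Mq \<in> carrier_mat n n" unfolding Mq_def by auto
  have U: "U \<in> carrier_mat n N" unfolding U_def by auto
  have V: "V \<in> carrier_mat N n" unfolding V_def by auto
  have of_rat_eq: "complex_of_rat q = complex_of_real (of_rat q)" for q
    by (cases q) (simp add: of_rat_rat)
  have factor: "char_matrix (of_rat_hom.mat_hom Mq) c = U * V"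
  proof (rule eq_matI)
    fix i k assume "i < dim_row (U * V)" and "k < dim_col (U * V)"
    then have i: "i < n" and k: "k < n" using U V by auto
    have "(U * V) $$ (i, k) = (\<Sum>j<N. U $$ (i, j) * V $$ (j, k))"
      using i k U V by (simp add: scalar_prod_def lessThan_atLeast0)
    also have "\<dots> = complex_of_real ((\<Sum>j<N. u (xs!i) (js!j) * v (js!j) (xs!k)) / b)"
      using i k by (simp add: U_def V_def sum_divide_distrib)
    also have "(\<Sum>j<N. u (xs!i) (js!j) * v (js!j) (xs!k)) = (\<Sum>j\<in>J. u (xs!i) j * v j (xs!k))"
      using sum.reindex_bij_betw[OF bij, of "\<lambda>j. u (xs!i) j * v j (xs!k)"] by simp
    also have "\<dots> = F (xs!i) (xs!k)" using Fuv xsY i k by simp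
    also have "\<dots> = (if i = k then a else b * of_rat (R (xs!i) (xs!k)))"
      using FR xsY xs_inj i k by simp
    finally have UV: "(U * V) $$ (i, k)
        = complex_of_real ((if i = k then a else b * of_rat (R (xs!i) (xs!k))) / b)" .
    show "char_matrix (of_rat_hom.mat_hom Mq) c $$ (i, k) = (U * V) $$ (i, k)"
      unfolding UV using i k b0 Mq by (auto simp: char_matrix_def Mq_def c_def of_rat_eq)
  qed (use Mq U V in \<open>simp_all add: char_matrix_def\<close>)
  have "n - N \<le> kernel_dim (U * V)"
    using kernel_dim_ge_cols_minus_rows[OF V] kernel_dim_le_kernel_dim_mult[OF V U] by linarith
  then have "c \<in> \<rat>"
    using rational_if_large_eigenspace[OF Mq] factor low_rank nY NJ by simp
  then obtain q where "complex_of_real (- a / b) = complex_of_real (of_rat q)"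
    unfolding c_def of_rat_eq[symmetric] by (rule Rats_cases) simp
  then have "- a / b = of_rat q" by (simp only: of_real_eq_iff)
  then have "a / b = of_rat (- q)" by (simp add: of_rat_minus)
  then show ?thesis by simp
qed

text \<open>Jordan_Normal_Form's notation for its own vectors shadows \<open>$\<close> and \<open>\<bullet>\<close> of HOL-Analysis.\<close>

no_notation Matrix.vec_index (infixl "$" 100)
no_notation Matrix.scalar_prod (infix "\<bullet>" 70)

section \<open>Homogeneous polynomial functions\<close>

definition monomial_fun :: "'d multiset \<Rightarrow> real ^ 'd \<Rightarrow> real" where
  "monomial_fun m x = (\<Prod>i\<in>#m. x $ i)"

definition homogeneous_fun :: "nat \<Rightarrow> (real ^ 'd::finite \<Rightarrow> real) \<Rightarrow> bool" where
  "homogeneous_fun k f \<longleftrightarrow>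
     (\<exists>c. \<forall>x. f x = (\<Sum>m\<in>multisets_of_size UNIV k. c m * monomial_fun m x))"

lemma finite_multisets_of_size_UNIV: "finite (multisets_of_size (UNIV :: 'd::finite set) k)"
  by (rule finite_multisets_of_size) simp

lemma card_multisets_of_size_mono:
  assumes "finite A" and "a \<in> A" and "k \<le> l"
  shows "card (multisets_of_size A k) \<le> card (multisets_of_size A l)"
proof (rule card_inj_on_le)
  show "inj_on (\<lambda>m. m + replicate_mset (l - k) a) (multisets_of_size A k)"
    by (rule inj_onI) simp
  show "(\<lambda>m. m + replicate_mset (l - k) a) ` multisets_of_size A k \<subseteq> multisets_of_size A l"
    using assms by (fastforce simp: multisets_of_size_def split: if_splits)
  show "finite (multisets_of_size A l)" using assms by blast
qed

lemma homogeneous_fun_zero: "homogeneous_fun k (\<lambda>x. 0)"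
  unfolding homogeneous_fun_def by (rule exI[of _ "\<lambda>m. 0"]) simp

lemma homogeneous_fun_add:
  assumes "homogeneous_fun k f" and "homogeneous_fun k g"
  shows "homogeneous_fun k (\<lambda>x. f x + g x)"
proof -
  from assms obtain c1 c2
    where "\<forall>x. f x = (\<Sum>m\<in>multisets_of_size UNIV k. c1 m * monomial_fun m x)"
      and "\<forall>x. g x = (\<Sum>m\<in>multisets_of_size UNIV k. c2 m * monomial_fun m x)"
    unfolding homogeneous_fun_def by auto
  then show ?thesis unfolding homogeneous_fun_def
    by (intro exI[of _ "\<lambda>m. c1 m + c2 m"]) (simp add: algebra_simps sum.distrib)
qed

lemma homogeneous_fun_scale:
  assumes "homogeneous_fun k f"
  shows "homogeneous_fun k (\<lambda>x. r * f x)"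
proof -
  from assms obtain c where "\<forall>x. f x = (\<Sum>m\<in>multisets_of_size UNIV k. c m * monomial_fun m x)"
    unfolding homogeneous_fun_def by auto
  then show ?thesis unfolding homogeneous_fun_def
    by (intro exI[of _ "\<lambda>m. r * c m"]) (simp add: sum_distrib_left algebra_simps)
qed

lemma homogeneous_fun_sum:
  assumes "finite I" and "\<And>i. i \<in> I \<Longrightarrow> homogeneous_fun k (f i)"
  shows "homogeneous_fun k (\<lambda>x. \<Sum>i\<in>I. f i x)"
  using assms by (induction I rule: finite_induct) (simp_all add: homogeneous_fun_zero homogeneous_fun_add)

lemma homogeneous_fun_mult:
  fixes f g :: "real ^ 'd::finite \<Rightarrow> real"
  assumes "homogeneous_fun k f" and "homogeneous_fun l g"
  shows "homogeneous_fun (k + l) (\<lambda>x. f x * g x)"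
proof -
  let ?Mk = "multisets_of_size (UNIV :: 'd set) k"
  let ?Ml = "multisets_of_size (UNIV :: 'd set) l"
  let ?M = "multisets_of_size (UNIV :: 'd set) (k + l)"
  from assms obtain c1 c2
    where c1: "\<forall>x. f x = (\<Sum>m\<in>?Mk. c1 m * monomial_fun m x)"
      and c2: "\<forall>x. g x = (\<Sum>m\<in>?Ml. c2 m * monomial_fun m x)"
    unfolding homogeneous_fun_def by auto
  define c where "c m = (\<Sum>p\<in>{p \<in> ?Mk \<times> ?Ml. fst p + snd p = m}. c1 (fst p) * c2 (snd p))" for m
  have fin: "finite (?Mk \<times> ?Ml)" using finite_multisets_of_size_UNIV by auto
  have img: "(\<lambda>p. fst p + snd p) ` (?Mk \<times> ?Ml) \<subseteq> ?M"
    by (auto simp: multisets_of_size_def)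
  have "f x * g x = (\<Sum>m\<in>?M. c m * monomial_fun m x)" for x
  proof -
    have "f x * g x = (\<Sum>p\<in>?Mk \<times> ?Ml. c1 (fst p) * c2 (snd p) * monomial_fun (fst p + snd p) x)"
      unfolding c1[rule_format] c2[rule_format] sum_product sum.cartesian_product
      by (rule sum.cong) (auto simp: monomial_fun_def algebra_simps)
    also have "\<dots> = (\<Sum>m\<in>?M. \<Sum>p\<in>{p \<in> ?Mk \<times> ?Ml. fst p + snd p = m}.
                        c1 (fst p) * c2 (snd p) * monomial_fun (fst p + snd p) x)"
      by (rule sum.group[OF fin finite_multisets_of_size_UNIV img, symmetric])
    also have "\<dots> = (\<Sum>m\<in>?M. c m * monomial_fun m x)"
      unfolding c_def sum_distrib_right by (rule sum.cong) auto
    finally show ?thesis .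
  qed
  then show ?thesis unfolding homogeneous_fun_def by blast
qed

lemma homogeneous_fun_one: "homogeneous_fun 0 (\<lambda>x. 1)"
proof -
  have "multisets_of_size UNIV 0 = {{#}}" by (auto simp: multisets_of_size_def)
  then show ?thesis unfolding homogeneous_fun_def
    by (intro exI[of _ "\<lambda>m. 1"]) (simp add: monomial_fun_def)
qed

lemma homogeneous_fun_power:
  "homogeneous_fun k f \<Longrightarrow> homogeneous_fun (k * n) (\<lambda>x. f x ^ n)"
proof (induction n)
  case 0
  then show ?case by (simp add: homogeneous_fun_one)
next
  case (Suc n)
  have "homogeneous_fun (k + k * n) (\<lambda>x. f x * f x ^ n)"
    by (rule homogeneous_fun_mult[OF Suc.prems Suc.IH[OF Suc.prems]])
  then show ?case by (simp add: algebra_simps)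
qed

lemma homogeneous_fun_prod:
  assumes "finite I" and "\<And>i. i \<in> I \<Longrightarrow> homogeneous_fun k (f i)"
  shows "homogeneous_fun (k * card I) (\<lambda>x. \<Prod>i\<in>I. f i x)"
  using assms
proof (induction I rule: finite_induct)
  case empty
  then show ?case by (simp add: homogeneous_fun_one)
next
  case (insert a I)
  have "homogeneous_fun (k + k * card I) (\<lambda>x. f a x * (\<Prod>i\<in>I. f i x))"
    using insert by (intro homogeneous_fun_mult) auto
  then show ?case using insert by (simp add: algebra_simps)
qed

lemma homogeneous_fun_component: "homogeneous_fun 1 (\<lambda>x :: real ^ 'd::finite. x $ i)"
proof -
  have i: "{#i#} \<in> multisets_of_size UNIV 1" by (auto simp: multisets_of_size_def)
  have "(\<Sum>m\<in>multisets_of_size UNIV 1. (if m = {#i#} then 1 else 0) * monomial_fun m x) = x $ i"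
    for x :: "real ^ 'd"
  proof -
    have "(\<Sum>m\<in>multisets_of_size UNIV 1. (if m = {#i#} then 1 else 0) * monomial_fun m x)
        = (\<Sum>m\<in>multisets_of_size UNIV 1. if m = {#i#} then monomial_fun m x else 0)"
      by (rule sum.cong) auto
    also have "\<dots> = monomial_fun {#i#} x"
      using sum.delta[OF finite_multisets_of_size_UNIV, of "{#i#}" "\<lambda>m. monomial_fun m x"] i by auto
    finally show ?thesis by (simp add: monomial_fun_def)
  qed
  then show ?thesis unfolding homogeneous_fun_def by metis
qed

lemma homogeneous_fun_inner: "homogeneous_fun 1 (\<lambda>x. x \<bullet> y)"
proof -
  have "homogeneous_fun 1 (\<lambda>x. \<Sum>i\<in>UNIV. y $ i * x $ i)"
    by (intro homogeneous_fun_sum homogeneous_fun_scale homogeneous_fun_component) auto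
  then show ?thesis by (simp add: inner_vec_def mult.commute)
qed

lemma homogeneous_fun_inner_self: "homogeneous_fun 2 (\<lambda>x. x \<bullet> x)"
proof -
  have "homogeneous_fun 2 (\<lambda>x :: real ^ 'd. x $ i * x $ i)" for i
    using homogeneous_fun_mult[OF homogeneous_fun_component homogeneous_fun_component, of i i]
    by (simp add: numeral_2_eq_2)
  then have "homogeneous_fun 2 (\<lambda>x. \<Sum>i\<in>UNIV. x $ i * x $ i)"
    by (intro homogeneous_fun_sum) simp_all
  then show ?thesis by (simp add: inner_vec_def)
qed

section \<open>Rationality from a low-degree annihilating polynomial\<close>

lemma ratio_rational_if_annihilating_form:
  fixes Y :: "(real ^ 'd) set" and G :: "real ^ 'd \<Rightarrow> real ^ 'd \<Rightarrow> real"
    and \<phi> :: "real \<Rightarrow> real" and \<beta> \<sigma> :: real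
  assumes fY: "finite Y"
    and unit: "\<And>x. x \<in> Y \<Longrightarrow> x \<bullet> x = 1"
    and G: "\<And>y. y \<in> Y \<Longrightarrow> homogeneous_fun k (G y)"
    and G_eq: "\<And>x y. x \<in> Y \<Longrightarrow> y \<in> Y \<Longrightarrow> G y x = \<phi> (x \<bullet> y)"
    and \<phi>_\<beta>: "\<phi> \<beta> \<noteq> 0" and \<phi>_minus_\<beta>: "\<phi> (- \<beta>) = \<sigma> * \<phi> \<beta>" and \<sigma>: "\<sigma> \<in> \<rat>"
    and \<phi>_vanishes: "\<And>x y. x \<in> Y \<Longrightarrow> y \<in> Y \<Longrightarrow> x \<noteq> y \<Longrightarrow> x \<bullet> y \<noteq> \<beta> \<Longrightarrow> x \<bullet> y \<noteq> - \<beta>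
        \<Longrightarrow> \<phi> (x \<bullet> y) = 0"
    and large: "2 * card (multisets_of_size (UNIV :: 'd set) k) < card Y"
  shows "\<phi> 1 / \<phi> \<beta> \<in> \<rat>"
proof -
  let ?M = "multisets_of_size (UNIV :: 'd set) k"
  obtain q where q: "\<sigma> = of_rat q" using \<sigma> by (rule Rats_cases)
  have "\<forall>y\<in>Y. \<exists>c. \<forall>x. G y x = (\<Sum>m\<in>?M. c m * monomial_fun m x)"
    using G unfolding homogeneous_fun_def by blast
  then obtain C where C: "\<And>y x. y \<in> Y \<Longrightarrow> G y x = (\<Sum>m\<in>?M. C y m * monomial_fun m x)"
    by metis
  show ?thesis
  proof (rule diag_ratio_rational_if_low_rank[OF fY finite_multisets_of_size_UNIV \<phi>_\<beta> large,
        where F = "\<lambda>x y. \<phi> (x \<bullet> y)"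
          and R = "\<lambda>x y. if x \<bullet> y = \<beta> then 1 else if x \<bullet> y = - \<beta> then q else 0"
          and u = "\<lambda>x m. monomial_fun m x" and v = "\<lambda>m y. C y m"])
    fix x y assume x: "x \<in> Y" and y: "y \<in> Y"
    show "\<phi> (x \<bullet> y) = (\<Sum>m\<in>?M. monomial_fun m x * C y m)"
      using G_eq[OF x y] C[OF y, of x] by (simp add: mult.commute)
    show "\<phi> (x \<bullet> y) = (if x = y then \<phi> 1 else \<phi> \<beta> *
            of_rat (if x \<bullet> y = \<beta> then 1 else if x \<bullet> y = - \<beta> then q else 0))"
      using unit[OF x] \<phi>_minus_\<beta> \<phi>_vanishes[OF x y] q by (auto simp: mult.commute)
  qed
qed

definition separating_roots :: "real set \<Rightarrow> real \<Rightarrow> real set" where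
  "separating_roots A \<beta> = {\<alpha> \<in> A. 0 < \<alpha> \<and> \<alpha> \<noteq> \<bar>\<beta>\<bar>}"

definition separating_degree :: "real set \<Rightarrow> real \<Rightarrow> nat" where
  "separating_degree A \<beta> = of_bool (0 \<in> A) + 2 * card (separating_roots A \<beta>)"

definition separating_poly :: "real set \<Rightarrow> real \<Rightarrow> real \<Rightarrow> real" where
  "separating_poly A \<beta> t = t ^ of_bool (0 \<in> A) * (\<Prod>\<alpha>\<in>separating_roots A \<beta>. t\<^sup>2 - \<alpha>\<^sup>2)"

definition separating_form :: "real set \<Rightarrow> real \<Rightarrow> real ^ 'd \<Rightarrow> real ^ 'd \<Rightarrow> real" where
  "separating_form A \<beta> y x =
     (x \<bullet> y) ^ of_bool (0 \<in> A) * (\<Prod>\<alpha>\<in>separating_roots A \<beta>. (x \<bullet> y)\<^sup>2 - \<alpha>\<^sup>2 * (x \<bullet> x))"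

lemma separating_degree_le:
  assumes fA: "finite A" and sym: "\<And>t. t \<in> A \<Longrightarrow> - t \<in> A" and \<beta>: "\<beta> \<in> A" "\<beta> \<noteq> 0"
  shows "separating_degree A \<beta> + 2 \<le> card A"
proof -
  let ?Q = "separating_roots A \<beta>"
  define Z where "Z = A \<inter> {0}"
  have fZ: "finite Z" and fQ: "finite ?Q"
    using fA unfolding Z_def separating_roots_def by auto
  have "card Z = of_bool (0 \<in> A)" unfolding Z_def by auto
  moreover have "card (uminus ` ?Q) = card ?Q" by (rule card_image) (auto simp: inj_on_def)
  moreover have "card {\<beta>, - \<beta>} = 2" using \<beta> by simp
  moreover have "Z \<inter> ?Q = {}" and "(Z \<union> ?Q) \<inter> uminus ` ?Q = {}"
    and "(Z \<union> ?Q \<union> uminus ` ?Q) \<inter> {\<beta>, - \<beta>} = {}"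
    unfolding Z_def separating_roots_def using \<beta> by (auto simp: abs_if)
  ultimately have "card (Z \<union> ?Q \<union> uminus ` ?Q \<union> {\<beta>, - \<beta>}) = separating_degree A \<beta> + 2"
    using fZ fQ card_Un_disjoint[of Z ?Q] card_Un_disjoint[of "Z \<union> ?Q" "uminus ` ?Q"]
      card_Un_disjoint[of "Z \<union> ?Q \<union> uminus ` ?Q" "{\<beta>, - \<beta>}"]
    by (simp add: separating_degree_def)
  moreover have "Z \<union> ?Q \<union> uminus ` ?Q \<union> {\<beta>, - \<beta>} \<subseteq> A"
    unfolding Z_def separating_roots_def using sym \<beta> by auto
  ultimately show ?thesis by (metis card_mono[OF fA])
qed

lemma separating_poly_vanishes:
  assumes fA: "finite A" and sym: "\<And>t. t \<in> A \<Longrightarrow> - t \<in> A"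
    and t: "t \<in> A" "t \<noteq> \<beta>" "t \<noteq> - \<beta>"
  shows "separating_poly A \<beta> t = 0"
proof -
  have fQ: "finite (separating_roots A \<beta>)" using fA by (simp add: separating_roots_def)
  consider "t = 0" | "0 < t" | "t < 0" by linarith
  then show ?thesis
  proof cases
    case 1
    then show ?thesis using t by (simp add: separating_poly_def)
  next
    case 2
    then have "t \<in> separating_roots A \<beta>" using t by (auto simp: separating_roots_def)
    then show ?thesis using fQ by (auto simp: separating_poly_def prod_zero_iff)
  next
    case 3
    then have "- t \<in> separating_roots A \<beta>"
      using t sym[OF t(1)] by (auto simp: separating_roots_def)
    then have "\<exists>\<alpha>\<in>separating_roots A \<beta>. t\<^sup>2 - \<alpha>\<^sup>2 = 0" by (intro bexI[of _ "- t"]) simp_all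
    then show ?thesis using fQ by (simp add: separating_poly_def prod_zero_iff)
  qed
qed

lemma separating_poly_at_\<beta>:
  assumes "finite A" and "\<beta> \<noteq> 0"
  shows "separating_poly A \<beta> \<beta> \<noteq> 0"
proof -
  have "\<beta>\<^sup>2 - \<alpha>\<^sup>2 \<noteq> 0" if "\<alpha> \<in> separating_roots A \<beta>" for \<alpha>
    using that by (auto simp: separating_roots_def power2_eq_iff)
  then show ?thesis using assms by (simp add: separating_poly_def separating_roots_def prod_zero_iff)
qed

lemma separating_poly_at_1:
  assumes "finite A" and "\<And>t. t \<in> A \<Longrightarrow> t < 1"
  shows "separating_poly A \<beta> 1 \<noteq> 0"
proof -
  have "1 - \<alpha>\<^sup>2 \<noteq> 0" if "\<alpha> \<in> separating_roots A \<beta>" for \<alpha>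
  proof -
    have "0 < \<alpha>" "\<alpha> < 1" using that assms(2) by (auto simp: separating_roots_def)
    then have "\<alpha>\<^sup>2 < 1" by (simp add: power_less_one_iff abs_less_iff)
    then show ?thesis by simp
  qed
  then show ?thesis using assms(1) by (simp add: separating_poly_def separating_roots_def prod_zero_iff)
qed

lemma separating_poly_minus:
  "separating_poly A \<beta> (- t) = (-1) ^ separating_degree A \<beta> * separating_poly A \<beta> t"
  by (simp add: separating_poly_def separating_degree_def power_add power_mult power_minus[of t])

lemma separating_form_eq:
  "x \<bullet> x = 1 \<Longrightarrow> separating_form A \<beta> y x = separating_poly A \<beta> (x \<bullet> y)"
  by (simp add: separating_form_def separating_poly_def)

lemma homogeneous_fun_separating_form:
  assumes "finite A"
  shows "homogeneous_fun (separating_degree A \<beta>) (separating_form A \<beta> y)"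
proof -
  have "homogeneous_fun 2 (\<lambda>x. (x \<bullet> y)\<^sup>2)"
    using homogeneous_fun_power[OF homogeneous_fun_inner[of y], of 2] by simp
  then have "homogeneous_fun 2 (\<lambda>x. (x \<bullet> y)\<^sup>2 + (- \<alpha>\<^sup>2) * (x \<bullet> x))" for \<alpha>
    using homogeneous_fun_add homogeneous_fun_scale[OF homogeneous_fun_inner_self] by blast
  then have "homogeneous_fun (2 * card (separating_roots A \<beta>))
      (\<lambda>x. \<Prod>\<alpha>\<in>separating_roots A \<beta>. (x \<bullet> y)\<^sup>2 - \<alpha>\<^sup>2 * (x \<bullet> x))"
    using assms by (intro homogeneous_fun_prod) (simp_all add: separating_roots_def)
  from homogeneous_fun_mult[OF homogeneous_fun_power[OF homogeneous_fun_inner] this]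
  show ?thesis unfolding separating_form_def separating_degree_def by simp
qed

text \<open>The polynomial \<open>t h(t)\<close> has degree one more than \<open>h\<close>, so both ratios \<open>h(1)/h(\<beta>)\<close> and
  \<open>h(1)/(\<beta> h(\<beta>))\<close> are rational, and \<open>\<beta>\<close> is their quotient.\<close>

lemma rational_if_few_inner_products:
  fixes Y :: "(real ^ 'd) set" and A :: "real set"
  assumes fY: "finite Y" and unit: "\<And>x. x \<in> Y \<Longrightarrow> x \<bullet> x = 1"
    and inner_in_A: "\<And>x y. x \<in> Y \<Longrightarrow> y \<in> Y \<Longrightarrow> x \<noteq> y \<Longrightarrow> x \<bullet> y \<in> A"
    and fA: "finite A" and sym: "\<And>t. t \<in> A \<Longrightarrow> - t \<in> A" and less_1: "\<And>t. t \<in> A \<Longrightarrow> t < 1"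
    and large: "2 * card (multisets_of_size (UNIV :: 'd set) (card A - 1)) < card Y"
    and \<beta>: "\<beta> \<in> A"
  shows "\<beta> \<in> \<rat>"
proof (cases "\<beta> = 0")
  case True
  then show ?thesis by simp
next
  case False
  let ?k = "separating_degree A \<beta>" and ?h = "separating_poly A \<beta>"
  have "?k + 2 \<le> card A" by (rule separating_degree_le[OF fA sym \<beta> False])
  have large_k: "2 * card (multisets_of_size (UNIV :: 'd set) l) < card Y" if "l \<le> ?k + 1" for l
  proof -
    have "l \<le> card A - 1" using that \<open>?k + 2 \<le> card A\<close> by linarith
    then have "card (multisets_of_size (UNIV :: 'd set) l) \<le> card (multisets_of_size (UNIV :: 'd set) (card A - 1))"
      using card_multisets_of_size_mono[of "UNIV :: 'd set" undefined l "card A - 1"] by simp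
    with large show ?thesis by linarith
  qed
  have vanishes: "?h (x \<bullet> y) = 0"
    if "x \<in> Y" "y \<in> Y" "x \<noteq> y" "x \<bullet> y \<noteq> \<beta>" "x \<bullet> y \<noteq> - \<beta>" for x y
    using separating_poly_vanishes[OF fA sym inner_in_A[OF that(1-3)] that(4,5)] .
  have h_1: "?h 1 \<noteq> 0" by (rule separating_poly_at_1[OF fA less_1])
  have h_\<beta>: "?h \<beta> \<noteq> 0" by (rule separating_poly_at_\<beta>[OF fA False])
  have form_hom: "homogeneous_fun ?k (separating_form A \<beta> y)" for y
    by (rule homogeneous_fun_separating_form[OF fA])
  have form_eq: "separating_form A \<beta> y x = ?h (x \<bullet> y)" if "x \<in> Y" for x y
    by (rule separating_form_eq[OF unit[OF that]])
  have h_ratio: "?h 1 / ?h \<beta> \<in> \<rat>"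
    by (rule ratio_rational_if_annihilating_form[OF fY unit form_hom form_eq h_\<beta>
          separating_poly_minus _ vanishes large_k]) simp_all
  have th_ratio: "(1 * ?h 1) / (\<beta> * ?h \<beta>) \<in> \<rat>"
  proof (rule ratio_rational_if_annihilating_form[OF fY unit, where \<phi> = "\<lambda>t. t * ?h t"
        and G = "\<lambda>y x. (x \<bullet> y) * separating_form A \<beta> y x" and k = "1 + ?k"
        and \<sigma> = "(-1) ^ (?k + 1)"])
    show "homogeneous_fun (1 + ?k) (\<lambda>x. (x \<bullet> y) * separating_form A \<beta> y x)" for y
      by (rule homogeneous_fun_mult[OF homogeneous_fun_inner form_hom])
    show "(- \<beta>) * ?h (- \<beta>) = (-1) ^ (?k + 1) * (\<beta> * ?h \<beta>)"
      by (simp add: separating_poly_minus)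
    show "2 * card (multisets_of_size (UNIV :: 'd set) (1 + ?k)) < card Y"
      by (rule large_k) simp
  qed (simp_all add: form_eq vanishes h_\<beta> False)
  have "\<beta> = (?h 1 / ?h \<beta>) / ((1 * ?h 1) / (\<beta> * ?h \<beta>))"
    using h_1 h_\<beta> False by (simp add: field_simps)
  then show ?thesis using h_ratio th_ratio by (metis Rats_divide)
qed

section \<open>Antipodal sets on the sphere\<close>

lemma exists_antipodal_half:
  fixes X :: "'a::real_vector set"
  assumes "finite X" and "antipodal X" and "0 \<notin> X"
  shows "\<exists>Y\<subseteq>X. card X = 2 * card Y \<and> (\<forall>x\<in>Y. - x \<notin> Y)"
  using assms
proof (induction "card X" arbitrary: X rule: less_induct)
  case less
  show ?case
  proof (cases "X = {}")
    case True
    then show ?thesis by auto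
  next
    case False
    then obtain x where x: "x \<in> X" by auto
    have mx: "- x \<in> X" using less.prems x by (auto simp: antipodal_def)
    have x_ne: "x \<noteq> - x"
    proof
      assume "x = - x"
      then have "(2::real) *\<^sub>R x = 0" by (metis add.right_inverse scaleR_2)
      with x less.prems show False by simp
    qed
    define X' where "X' = X - {x, - x}"
    have fX': "finite X'" using less.prems unfolding X'_def by auto
    have card_X': "card X' = card X - 2" "2 \<le> card X"
      unfolding X'_def using x mx x_ne less.prems
      by (simp_all add: card_Diff_subset) (metis card_2_iff card_mono empty_subsetI insert_subset)
    have "antipodal X'" "0 \<notin> X'"
      using less.prems unfolding X'_def antipodal_def by (auto simp: minus_equation_iff)
    with less.hyps[OF _ fX'] card_X' obtain Y' where Y': "Y' \<subseteq> X'" "card X' = 2 * card Y'" "\<forall>z\<in>Y'. - z \<notin> Y'"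
      by fastforce
    have "finite Y'" using Y'(1) fX' by (rule finite_subset)
    moreover have "x \<notin> Y'" using Y'(1) unfolding X'_def by auto
    ultimately have "card X = 2 * card (insert x Y')" using Y' card_X' by simp
    moreover have "insert x Y' \<subseteq> X" "\<forall>z\<in>insert x Y'. - z \<notin> insert x Y'"
      using Y' x x_ne unfolding X'_def by (auto simp: minus_equation_iff)
    ultimately show ?thesis by blast
  qed
qed

lemma inner_self_eq_1_if_mem_sphere:
  fixes x :: "'a::real_inner"
  shows "x \<in> sphere 0 1 \<Longrightarrow> x \<bullet> x = 1"
  by (simp flip: power2_norm_eq_inner)

lemma inner_diff_self_if_unit:
  fixes x y :: "'a::real_inner"
  shows "x \<bullet> x = 1 \<Longrightarrow> y \<bullet> y = 1 \<Longrightarrow> (x - y) \<bullet> (x - y) = 2 - 2 * (x \<bullet> y)"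
  by (simp add: inner_diff_left inner_diff_right inner_commute)

lemma card_B_if_s_distance_set:
  fixes X :: "'a::real_inner set"
  assumes "s_distance_set s X" and "X \<subseteq> sphere 0 1"
  shows "card (B X) = s"
proof -
  have dist_eq: "dist x y = sqrt (2 - 2 * (x \<bullet> y))" if "x \<in> X" "y \<in> X" for x y
  proof -
    have "x \<bullet> x = 1" "y \<bullet> y = 1" using that assms(2) inner_self_eq_1_if_mem_sphere by blast+
    then show ?thesis by (simp add: dist_norm norm_eq_sqrt_inner inner_diff_self_if_unit)
  qed
  have "distances X = (\<lambda>t. sqrt (2 - 2 * t)) ` B X"
    unfolding distances_def B_def using dist_eq by auto (metis dist_eq)
  moreover have "inj_on (\<lambda>t. sqrt (2 - 2 * t)) (B X)" by (auto simp: inj_on_def)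
  ultimately show ?thesis using assms(1) card_image by (metis s_distance_set_def)
qed

definition nonantipodal_B :: "'a::real_inner set \<Rightarrow> real set" where
  "nonantipodal_B X = {x \<bullet> y | x y. x \<in> X \<and> y \<in> X \<and> x \<noteq> y \<and> x \<noteq> - y}"

lemma nonantipodal_B_uminus:
  assumes "antipodal X" and "t \<in> nonantipodal_B X"
  shows "- t \<in> nonantipodal_B X"
proof -
  from assms(2) obtain x y where "x \<in> X" "y \<in> X" "x \<noteq> y" "x \<noteq> - y" "t = x \<bullet> y"
    unfolding nonantipodal_B_def by auto
  with assms(1) show ?thesis unfolding nonantipodal_B_def antipodal_def
    by (intro CollectI exI[of _ x] exI[of _ "- y"]) auto
qed

lemma nonantipodal_B_less_1:
  assumes "X \<subseteq> sphere 0 1" and "t \<in> nonantipodal_B X"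
  shows "t < 1"
proof -
  from assms(2) obtain x y where xy: "x \<in> X" "y \<in> X" "x \<noteq> y" "t = x \<bullet> y"
    unfolding nonantipodal_B_def by auto
  have "x \<bullet> x = 1" "y \<bullet> y = 1" using xy assms(1) inner_self_eq_1_if_mem_sphere by blast+
  have "0 < (x - y) \<bullet> (x - y)" using xy(3) by simp
  also have "\<dots> = 2 - 2 * t"
    using xy \<open>x \<bullet> x = 1\<close> \<open>y \<bullet> y = 1\<close> by (simp add: inner_diff_self_if_unit)
  finally show ?thesis by simp
qed

lemma B_eq_insert_nonantipodal_B:
  fixes X :: "'a::real_inner set"
  assumes sphere: "X \<subseteq> sphere 0 1" and "antipodal X" and "X \<noteq> {}"
  shows "B X = insert (-1) (nonantipodal_B X)"
proof (intro equalityI subsetI)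
  fix t assume "t \<in> B X"
  then obtain x y where "x \<in> X" "y \<in> X" "x \<noteq> y" "t = x \<bullet> y" unfolding B_def by auto
  then show "t \<in> insert (-1) (nonantipodal_B X)"
    using sphere inner_self_eq_1_if_mem_sphere[of y] unfolding nonantipodal_B_def by fastforce
next
  obtain x where x: "x \<in> X" using assms(3) by auto
  then have unit: "x \<bullet> x = 1" using sphere inner_self_eq_1_if_mem_sphere by blast
  have "x \<noteq> - x"
  proof
    assume "x = - x"
    then have "x \<bullet> x = - (x \<bullet> x)" by (metis inner_minus_right)
    with unit show False by simp
  qed
  moreover have "- x \<in> X" "x \<bullet> - x = -1" using x unit assms(2) by (auto simp: antipodal_def)
  ultimately have "-1 \<in> B X"
    unfolding B_def using x by (intro CollectI exI[of _ x] exI[of _ "- x"]) simp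
  moreover have "nonantipodal_B X \<subseteq> B X" unfolding nonantipodal_B_def B_def by blast
  moreover fix t assume "t \<in> insert (-1) (nonantipodal_B X)"
  ultimately show "t \<in> B X" by blast
qed

theorem theorem5p4:
  fixes X :: "(real ^ 'd) set" and s :: nat
  assumes "s \<ge> 4"
    and "s_distance_set s X"
    and "antipodal X"
    and "X \<subseteq> sphere 0 1"
    and "real (card X) \<ge> 4 * real ((CARD('d) + s - 3) choose (s - 2)) + 2"
  shows "\<forall>\<beta>\<in>B X. \<beta> \<in> \<rat>"
proof
  fix \<beta> assume \<beta>: "\<beta> \<in> B X"
  define A where "A = nonantipodal_B X"
  define N where "N = (CARD('d) + s - 3) choose (s - 2)"
  have fX: "finite X" using assms(2) by (simp add: s_distance_set_def)
  have unit: "\<And>x. x \<in> X \<Longrightarrow> x \<bullet> x = 1" using assms(4) inner_self_eq_1_if_mem_sphere by blast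
  have "real (4 * N + 2) \<le> real (card X)" using assms(5) unfolding N_def by simp
  then have card_X: "4 * N + 2 \<le> card X" by (simp only: of_nat_le_iff)
  then have BX: "B X = insert (-1) A"
    unfolding A_def using B_eq_insert_nonantipodal_B[OF assms(4,3)] by fastforce
  have sym: "\<And>t. t \<in> A \<Longrightarrow> - t \<in> A" and less_1: "\<And>t. t \<in> A \<Longrightarrow> t < 1"
    unfolding A_def using nonantipodal_B_uminus[OF assms(3)] nonantipodal_B_less_1[OF assms(4)] by blast+
  have card_B: "card (B X) = s" by (rule card_B_if_s_distance_set[OF assms(2,4)])
  then have fA: "finite A" using BX assms(1) card_ge_0_finite[of "B X"] by simp
  have "-1 \<notin> A" using sym less_1 by force
  then have card_A: "card A = s - 1" using card_B BX fA by simp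
  have "0 \<notin> X" using unit by force
  then obtain Y where Y: "Y \<subseteq> X" "card X = 2 * card Y" "\<forall>x\<in>Y. - x \<notin> Y"
    using exists_antipodal_half[OF fX assms(3)] by blast
  have "finite Y" using Y(1) fX by (rule finite_subset)
  moreover have "\<And>x. x \<in> Y \<Longrightarrow> x \<bullet> x = 1" using Y(1) unit by blast
  moreover have "\<And>x y. x \<in> Y \<Longrightarrow> y \<in> Y \<Longrightarrow> x \<noteq> y \<Longrightarrow> x \<bullet> y \<in> A"
    using Y unfolding A_def nonantipodal_B_def by blast
  moreover have "card (multisets_of_size (UNIV :: 'd set) (card A - 1)) = N"
  proof -
    have "card A - 1 = s - 2" and "CARD('d) + (s - 2) - 1 = CARD('d) + s - 3"
      using card_A assms(1) by auto
    then show ?thesis unfolding N_def by (simp add: card_multisets_of_size)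
  qed
  then have "2 * card (multisets_of_size (UNIV :: 'd set) (card A - 1)) < card Y"
    using card_X Y(2) by simp
  ultimately have "\<beta> \<in> A \<Longrightarrow> \<beta> \<in> \<rat>"
    using rational_if_few_inner_products[OF _ _ _ fA sym less_1] by blast
  then show "\<beta> \<in> \<rat>" using \<beta> BX by auto
qed

end
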